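(* Let $c,d>0$ and $\mathcal R(c,d)=(0,c)\times(0,d)$. (a) (Torus.) Suppose $u$ is a real-valued eigenfunction with $-\Delta u=\lambda u$ on $\mathcal R(c,d)$ satisfying periodic boundary conditions $u(0,y)=u(c,y)$, $u(x,0)=u(x,d)$, $\partial_x u(0,y)=\partial_x u(c,y)$, $\partial_y u(x,0)=\partial_y u(x,d)$. If $u>0$ on $\partial\mathcal R(c,d)$, then $u\equiv C$ for some positive constant $C$. (b) (Cylinder.) Suppose $u$ is a real-valued eigenfunction with $-\Delta u=\lambda u$ on $\mathcal R(c,d)$ satisfying Neumann boundary conditions $\partial_y u=0$ on $y=0$ and $y=d$, and periodic boundary conditions $u(0,y)=u(c,y)$, $\partial_x u(0,y)=\partial_x u(c,y)$ in $x$. If $u>0$ on $\partial\mathcal R(c,d)$, then $u\equiv C$ for some positive constant $C$. *)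

theory Defs
  imports "HOL-Analysis.Analysis"
begin

definition px :: "(real \<times> real \<Rightarrow> real) \<Rightarrow> real \<times> real \<Rightarrow> real" where
  "px f = (\<lambda>(x, y). deriv (\<lambda>t. f (t, y)) x)"

definition py :: "(real \<times> real \<Rightarrow> real) \<Rightarrow> real \<times> real \<Rightarrow> real" where
  "py f = (\<lambda>(x, y). deriv (\<lambda>t. f (x, t)) y)"

definition has_px_on :: "(real \<times> real) set \<Rightarrow> (real \<times> real \<Rightarrow> real) \<Rightarrow> bool" where
  "has_px_on S f \<longleftrightarrow> (\<forall>(x, y)\<in>S. (\<lambda>t. f (t, y)) differentiable (at x))"

definition has_py_on :: "(real \<times> real) set \<Rightarrow> (real \<times> real \<Rightarrow> real) \<Rightarrow> bool" where
  "has_py_on S f \<longleftrightarrow> (\<forall>(x, y)\<in>S. (\<lambda>t. f (x, t)) differentiable (at y))"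

definition C2_on :: "(real \<times> real) set \<Rightarrow> (real \<times> real \<Rightarrow> real) \<Rightarrow> bool" where
  "C2_on S u \<longleftrightarrow>
     continuous_on S u \<and> has_px_on S u \<and> has_py_on S u \<and>
     continuous_on S (px u) \<and> continuous_on S (py u) \<and>
     has_px_on S (px u) \<and> has_py_on S (px u) \<and> has_px_on S (py u) \<and> has_py_on S (py u) \<and>
     continuous_on S (px (px u)) \<and> continuous_on S (py (px u)) \<and>
     continuous_on S (px (py u)) \<and> continuous_on S (py (py u))"

definition laplacian :: "(real \<times> real \<Rightarrow> real) \<Rightarrow> real \<times> real \<Rightarrow> real" where
  "laplacian u = (\<lambda>p. px (px u) p + py (py u) p)"

end

theory Submission
  imports Defs
begin

(* Integrating the equation against cos (nu x) over x turns each cosine moment of u, as a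
   function of y, into a solution of the oscillator equation f'' = -(lambda - nu^2) f with
   periodic or Neumann data at y = 0 and y = d.
   If lambda < 0, the moment with nu = 0 vanishes identically, contradicting u > 0 on the bottom
   edge; if lambda = 0, the energy identity forces grad u = 0.
   If lambda > 0, positivity on opposite edges forces cos (sqrt lambda c) = cos (sqrt lambda d) = 1.
   Then the moments of the bottom edge against cos (j sqrt lambda x), j >= 2, vanish and the one
   with j = 1 does not depend on y, so a Fejer kernel argument gives 2 M < A for the first
   cosine moment M and the mean A of the bottom edge, while integrating u cos (sqrt lambda x)
   over the rectangle in both orders gives d M = c A' / 2, with A' the mean of the left edge.
   Together with the same inequalities for the transposed function this gives
   c A' < d A < c A', a contradiction. *)

section \<open>A one-dimensional oscillator\<close>

lemma integral_eq_diff_real_derivative: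
  fixes F F' :: "real \<Rightarrow> real"
  assumes "a \<le> b" and "\<And>x. x \<in> {a..b} \<Longrightarrow> (F has_real_derivative F' x) (at x within {a..b})"
  shows "integral {a..b} F' = F b - F a"
  using assms
  by (intro integral_unique fundamental_theorem_of_calculus)
    (auto simp: has_real_derivative_iff_has_vector_derivative)

lemma continuous_on_real_derivative:
  assumes "\<And>x. x \<in> {a..b} \<Longrightarrow> (f has_real_derivative f' x) (at x within {a..b})"
  shows "continuous_on {a..b} f"
  using assms continuous_on_eq_continuous_within DERIV_continuous by blast

lemma real_derivative_zero_constant:
  assumes "\<And>x. x \<in> {a..b} \<Longrightarrow> (f has_real_derivative 0) (at x within {a..b})"
    and "x \<in> {a..b}"
  shows "f x = f a"
  using has_field_derivative_zero_constant[OF convex_real_interval(5) assms(1)] assms(2)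
  by (metis atLeastAtMost_iff dual_order.trans order_refl)

definition oscillator_on :: "real \<Rightarrow> real \<Rightarrow> (real \<Rightarrow> real) \<Rightarrow> (real \<Rightarrow> real) \<Rightarrow> bool" where
  "oscillator_on d \<mu> f f' \<longleftrightarrow> (\<forall>y\<in>{0..d}.
     (f has_real_derivative f' y) (at y within {0..d}) \<and>
     (f' has_real_derivative - \<mu> * f y) (at y within {0..d}))"

definition periodic_or_neumann :: "real \<Rightarrow> (real \<Rightarrow> real) \<Rightarrow> (real \<Rightarrow> real) \<Rightarrow> bool" where
  "periodic_or_neumann d f f' \<longleftrightarrow> (f 0 = f d \<and> f' 0 = f' d) \<or> (f' 0 = 0 \<and> f' d = 0)"

lemma oscillator_onD:
  assumes "oscillator_on d \<mu> f f'" and "y \<in> {0..d}"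
  shows "(f has_real_derivative f' y) (at y within {0..d})"
    and "(f' has_real_derivative - \<mu> * f y) (at y within {0..d})"
  using assms unfolding oscillator_on_def by auto

lemma oscillator_on_negative_eq_0:
  assumes "d > 0" and osc: "oscillator_on d \<mu> f f'" and "\<mu> < 0"
    and bc: "periodic_or_neumann d f f'" and y: "y \<in> {0..d}"
  shows "f y = 0"
proof -
  define E where "E y = f' y * f' y - \<mu> * (f y * f y)" for y
  have E_nonneg: "E y \<ge> 0" for y
  proof -
    have "\<mu> * (f y * f y) \<le> 0"
      using \<open>\<mu> < 0\<close> by (simp add: mult_nonpos_nonneg)
    then show ?thesis
      unfolding E_def by (smt (verit) zero_le_square)
  qed
  have "continuous_on {0..d} f" "continuous_on {0..d} f'"
    by (rule continuous_on_real_derivative, erule oscillator_onD[OF osc])+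
  then have cont_E: "continuous_on {0..d} E"
    unfolding E_def by (intro continuous_intros)
  \<comment> \<open>\<open>E\<close> is the derivative of \<open>f f'\<close>, whose boundary values agree.\<close>
  have "((\<lambda>y. f y * f' y) has_real_derivative E y) (at y within {0..d})"
    if "y \<in> {0..d}" for y
    using DERIV_mult[OF oscillator_onD[OF osc that]] unfolding E_def
    by (rule DERIV_cong) (simp add: algebra_simps)
  then have "integral {0..d} E = f d * f' d - f 0 * f' 0"
    using \<open>d > 0\<close> by (intro integral_eq_diff_real_derivative) auto
  also have "\<dots> = 0"
    using bc unfolding periodic_or_neumann_def by auto
  finally have "E y = 0"
    using integral_eq_0_iff[OF cont_E \<open>d > 0\<close>] E_nonneg y by auto
  then have "\<mu> * (f y * f y) = 0"
    using E_nonneg[of y] \<open>\<mu> < 0\<close> unfolding E_def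
    by (smt (verit) mult_nonpos_nonneg zero_le_square)
  then show ?thesis
    using \<open>\<mu> < 0\<close> by simp
qed

lemma oscillator_on_zero_constant:
  assumes "d > 0" and osc: "oscillator_on d 0 f f'"
    and bc: "periodic_or_neumann d f f'" and y: "y \<in> {0..d}"
  shows "f y = f 0"
proof -
  have f'_const: "f' y = f' 0" if "y \<in> {0..d}" for y
    using oscillator_onD(2)[OF osc] that by (intro real_derivative_zero_constant) auto
  have "((\<lambda>y. f y - f' 0 * y) has_real_derivative 0) (at y within {0..d})"
    if "y \<in> {0..d}" for y
    using oscillator_onD(1)[OF osc that] f'_const[OF that]
    by (auto intro!: derivative_eq_intros)
  then have linear: "f y = f 0 + f' 0 * y" if "y \<in> {0..d}" for y
    using real_derivative_zero_constant[of 0 d "\<lambda>y. f y - f' 0 * y" y] that by simp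
  have "f' 0 = 0"
  proof (rule ccontr)
    assume "f' 0 \<noteq> 0"
    then have "f 0 = f d"
      using bc f'_const[of d] \<open>d > 0\<close> unfolding periodic_or_neumann_def by auto
    then show False
      using linear[of d] \<open>d > 0\<close> \<open>f' 0 \<noteq> 0\<close> by simp
  qed
  then show ?thesis
    using linear[OF y] by simp
qed

lemma oscillator_on_positive_solution:
  assumes "w > 0" and osc: "oscillator_on d (w\<^sup>2) f f'" and y: "y \<in> {0..d}"
  shows "f y = f 0 * cos (w * y) + f' 0 / w * sin (w * y)"
    and "f' y = - f 0 * w * sin (w * y) + f' 0 * cos (w * y)"
proof -
  define h where "h y = f y - (f 0 * cos (w * y) + f' 0 / w * sin (w * y))" for y
  define h' where "h' y = f' y - (- f 0 * w * sin (w * y) + f' 0 * cos (w * y))" for y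
  \<comment> \<open>The error \<open>h\<close> solves the same equation with zero data, so its energy vanishes.\<close>
  have "((\<lambda>y. h' y * h' y + w\<^sup>2 * (h y * h y)) has_real_derivative 0) (at y within {0..d})"
    if "y \<in> {0..d}" for y
    using oscillator_onD[OF osc that] \<open>w > 0\<close> unfolding h_def h'_def
    by (auto intro!: derivative_eq_intros simp: algebra_simps power2_eq_square)
  then have "h' y * h' y + w\<^sup>2 * (h y * h y) = h' 0 * h' 0 + w\<^sup>2 * (h 0 * h 0)"
    using real_derivative_zero_constant y by blast
  also have "\<dots> = 0"
    using \<open>w > 0\<close> unfolding h_def h'_def by simp
  finally have "h y = 0 \<and> h' y = 0"
    using \<open>w > 0\<close> by (smt (verit) mult_pos_pos zero_le_square zero_less_power
        mult_eq_0_iff mult_nonneg_nonneg zero_less_mult_pos)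
  then show "f y = f 0 * cos (w * y) + f' 0 / w * sin (w * y)"
    and "f' y = - f 0 * w * sin (w * y) + f' 0 * cos (w * y)"
    unfolding h_def h'_def by simp_all
qed

lemma oscillator_on_positive_period:
  assumes "w > 0" "d > 0" and osc: "oscillator_on d (w\<^sup>2) f f'"
    and bc: "periodic_or_neumann d f f'" and "f 0 > 0" "f d > 0"
  shows "cos (w * d) = 1"
proof -
  define A B C S where "A = f 0" "B = f' 0 / w" "C = cos (w * d)" "S = sin (w * d)"
  have d: "d \<in> {0..d}"
    using \<open>d > 0\<close> by simp
  have fd: "f d = A * C + B * S"
    using oscillator_on_positive_solution(1)[OF \<open>w > 0\<close> osc d] unfolding A_B_C_S_def by simp
  have f'0: "f' 0 = w * B"
    using \<open>w > 0\<close> unfolding A_B_C_S_def by simp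
  have f'd: "f' d = w * (B * C - A * S)"
    using oscillator_on_positive_solution(2)[OF \<open>w > 0\<close> osc d] \<open>w > 0\<close>
    unfolding A_B_C_S_def by (simp add: algebra_simps)
  have "A > 0"
    using \<open>f 0 > 0\<close> unfolding A_B_C_S_def by simp
  from bc consider "f 0 = f d" "f' 0 = f' d" | "f' 0 = 0" "f' d = 0"
    unfolding periodic_or_neumann_def by blast
  then show ?thesis
  proof cases
    case 1
    then have "A = f d"
      unfolding A_B_C_S_def by simp
    then have e1: "A * C + B * S = A"
      using fd by simp
    have "w * (B * C - A * S) = w * B"
      using 1 f'0 f'd by linarith
    then have e2: "B * C - A * S = B"
      using \<open>w > 0\<close> by simp
    have "(A * A + B * B) * C = A * (A * C + B * S) + B * (B * C - A * S)"
      by (simp add: algebra_simps)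
    also have "\<dots> = A * A + B * B"
      by (simp only: e1 e2)
    finally have "(A * A + B * B) * C = A * A + B * B" .
    moreover have "A * A + B * B > 0"
      using \<open>A > 0\<close> by (simp add: add_pos_nonneg)
    ultimately show ?thesis
      unfolding A_B_C_S_def by simp
  next
    case 2
    then have "B = 0"
      using f'0 \<open>w > 0\<close> by simp
    then have "S = 0"
      using 2 f'd \<open>w > 0\<close> \<open>A > 0\<close> by simp
    then have "C = 1 \<or> C = - 1"
      using sin_cos_squared_add[of "w * d"] unfolding A_B_C_S_def by (simp add: power2_eq_1_iff)
    moreover have "A * C > 0"
      using fd \<open>f d > 0\<close> \<open>B = 0\<close> by simp
    ultimately show ?thesis
      using \<open>A > 0\<close> unfolding A_B_C_S_def by auto
  qed
qed

section \<open>A Fejer kernel estimate\<close>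

lemma cos_sin_multiple_of_period:
  assumes "cos t = 1"
  shows "cos (real j * t) = 1" and "sin (real j * t) = 0"
proof -
  obtain n :: int where "t = of_int n * 2 * pi"
    using assms cos_one_2pi_int by blast
  then have "real j * t = 2 * pi * of_int (int j * n)"
    by simp
  then show "cos (real j * t) = 1" and "sin (real j * t) = 0"
    by (simp_all only: cos_int_2pin sin_int_2pin)
qed

lemma integral_cos_multiple_over_period:
  assumes "a > 0" "w > 0" "cos (w * a) = 1" "j \<ge> 1"
  shows "integral {0..a} (\<lambda>x. cos (real j * w * x)) = 0"
proof -
  have "real j * w > 0"
    using assms by simp
  then have "integral {0..a} (\<lambda>x. cos (real j * w * x))
      = sin (real j * w * a) / (real j * w) - sin (real j * w * 0) / (real j * w)"
    using \<open>a > 0\<close> \<open>j \<ge> 1\<close>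
    by (intro integral_eq_diff_real_derivative) (auto intro!: derivative_eq_intros)
  also have "sin (real j * w * a) = 0"
    using cos_sin_multiple_of_period(2)[OF assms(3), of j] by (simp add: mult.assoc)
  finally show ?thesis
    by simp
qed

lemma integral_trig_times_cos_over_period:
  fixes w P Q :: real
  assumes "a > 0" "w > 0" "cos (w * a) = 1"
  shows "integral {0..a} (\<lambda>x. (P * cos (w * x) + Q * sin (w * x)) * cos (w * x)) = P * a / 2"
proof -
  define F where "F x = P * (w * x + sin (w * x) * cos (w * x)) + Q * (sin (w * x))\<^sup>2" for x
  have "(F has_real_derivative 2 * w * ((P * cos (w * x) + Q * sin (w * x)) * cos (w * x)))
      (at x within {0..a})" for x
  proof -
    have "(F has_real_derivative P * (w + w * (cos (w * x))\<^sup>2 - w * (sin (w * x))\<^sup>2)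
        + Q * (2 * w * sin (w * x) * cos (w * x))) (at x within {0..a})"
      unfolding F_def by (auto intro!: derivative_eq_intros simp: power2_eq_square algebra_simps)
    moreover have "P * (w + w * (cos (w * x))\<^sup>2 - w * (sin (w * x))\<^sup>2)
        + Q * (2 * w * sin (w * x) * cos (w * x))
        = 2 * w * ((P * cos (w * x) + Q * sin (w * x)) * cos (w * x))"
      using sin_cos_squared_add[of "w * x"] by algebra
    ultimately show ?thesis
      by simp
  qed
  then have "integral {0..a} (\<lambda>x. 2 * w * ((P * cos (w * x) + Q * sin (w * x)) * cos (w * x)))
      = F a - F 0"
    using \<open>a > 0\<close> by (intro integral_eq_diff_real_derivative) auto
  also have "\<dots> = 2 * w * (P * a / 2)"
    using cos_sin_multiple_of_period(2)[OF assms(3), of 1] unfolding F_def by simp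
  finally show ?thesis
    using \<open>w > 0\<close> by simp
qed

lemma fejer_kernel_nonneg:
  fixes t :: real
  shows "0 \<le> (\<Sum>j\<le>N. \<Sum>k\<le>N. (-1) ^ (j + k) * cos ((real j - real k) * t))"
proof -
  have "(\<Sum>j\<le>N. \<Sum>k\<le>N. (-1) ^ (j + k) * cos ((real j - real k) * t))
      = (\<Sum>j\<le>N. \<Sum>k\<le>N. ((-1) ^ j * cos (real j * t)) * ((-1) ^ k * cos (real k * t))
                       + ((-1) ^ j * sin (real j * t)) * ((-1) ^ k * sin (real k * t)))"
    by (intro sum.cong refl) (simp add: cos_diff power_add algebra_simps)
  also have "\<dots> = (\<Sum>k\<le>N. (-1) ^ k * cos (real k * t))\<^sup>2 + (\<Sum>k\<le>N. (-1) ^ k * sin (real k * t))\<^sup>2"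
    unfolding power2_eq_square sum_product by (simp add: sum.distrib)
  finally show ?thesis
    by simp
qed

lemma sum_tridiagonal:
  "(\<Sum>j\<le>N. \<Sum>k\<le>N. if j = k then A else if j = Suc k \<or> k = Suc j then B else 0)
     = real (N + 1) * A + 2 * real N * (B :: real)"
proof (induction N)
  case 0
  then show ?case
    by simp
next
  case (Suc N)
  have "(\<Sum>k\<le>N. if Suc N = k then A else if Suc N = Suc k \<or> k = Suc (Suc N) then B else 0) = B"
    "(\<Sum>j\<le>N. if j = Suc N then A else if j = Suc (Suc N) \<or> Suc N = Suc j then B else 0) = B"
    by (simp_all add: if_distrib cong: if_cong)
  with Suc.IH show ?case
    by (simp add: sum.distrib algebra_simps)
qed

lemma integral_times_fejer_kernel:
  fixes G :: "real \<Rightarrow> real"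
  assumes cont: "continuous_on {0..a} G"
    and vanish: "\<And>j. j \<ge> 2 \<Longrightarrow> integral {0..a} (\<lambda>x. G x * cos (real j * w * x)) = 0"
  shows "integral {0..a} (\<lambda>x. G x * (\<Sum>j\<le>N. \<Sum>k\<le>N. (-1) ^ (j + k) * cos ((real j - real k) * (w * x))))
       = real (N + 1) * integral {0..a} G - 2 * real N * integral {0..a} (\<lambda>x. G x * cos (w * x))"
proof -
  define M where "M n = integral {0..a} (\<lambda>x. G x * cos (real n * w * x))" for n :: nat
  have entry: "integral {0..a} (\<lambda>x. G x * ((-1) ^ (j + k) * cos ((real j - real k) * (w * x))))
      = (if j = k then M 0 else if j = Suc k \<or> k = Suc j then - M 1 else 0)" for j k
  proof -
    define m where "m = (if k \<le> j then j - k else k - j)"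
    have "j + k = m + 2 * min j k"
      unfolding m_def by auto
    then have sign: "(-1 :: real) ^ (j + k) = (-1) ^ m"
      by (simp add: power_add power_mult)
    have cos_eq: "cos ((real j - real k) * (w * x)) = cos (real m * w * x)" for x
    proof (cases "k \<le> j")
      case True
      then show ?thesis
        unfolding m_def by (simp add: mult.assoc)
    next
      case False
      then have "real j - real k = - real m"
        unfolding m_def by simp
      then show ?thesis
        by (simp add: mult.assoc)
    qed
    have "integral {0..a} (\<lambda>x. G x * ((-1) ^ (j + k) * cos ((real j - real k) * (w * x))))
        = (-1) ^ m * M m"
      unfolding sign cos_eq M_def by (subst mult.left_commute) (rule integral_mult_right)
    moreover have "m = 0 \<longleftrightarrow> j = k" "m = 1 \<longleftrightarrow> j = Suc k \<or> k = Suc j"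
      unfolding m_def by auto
    moreover have "M m = 0" if "m \<ge> 2"
      using vanish[OF that] unfolding M_def .
    ultimately show ?thesis
      by (auto simp: not_less_eq_eq)
  qed
  have integrable: "(\<lambda>x. G x * ((-1) ^ (j + k) * cos ((real j - real k) * (w * x)))) integrable_on {0..a}"
    for j k
    by (intro integrable_continuous_interval continuous_intros cont)
  have "integral {0..a} (\<lambda>x. G x * (\<Sum>j\<le>N. \<Sum>k\<le>N. (-1) ^ (j + k) * cos ((real j - real k) * (w * x))))
      = (\<Sum>j\<le>N. \<Sum>k\<le>N. integral {0..a} (\<lambda>x. G x * ((-1) ^ (j + k) * cos ((real j - real k) * (w * x)))))"
    unfolding sum_distrib_left
    by (subst integral_sum) (auto intro!: integrable_sum integrable integral_sum sum.cong)
  also have "\<dots> = real (N + 1) * M 0 + 2 * real N * - M 1"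
    unfolding entry by (rule sum_tridiagonal)
  finally show ?thesis
    unfolding M_def by simp
qed

lemma fejer_cos_moment_bound:
  fixes G :: "real \<Rightarrow> real"
  assumes "a > 0" "w > 0" "cos (w * a) = 1"
    and cont: "continuous_on {0..a} G" and pos: "\<And>x. x \<in> {0..a} \<Longrightarrow> G x > 0"
    and vanish: "\<And>j. j \<ge> 2 \<Longrightarrow> integral {0..a} (\<lambda>x. G x * cos (real j * w * x)) = 0"
  shows "2 * integral {0..a} (\<lambda>x. G x * cos (w * x)) < integral {0..a} G"
proof -
  define A where "A = integral {0..a} G"
  define C where "C = integral {0..a} (\<lambda>x. G x * cos (w * x))"
  define K where "K N x = (\<Sum>j\<le>N. \<Sum>k\<le>N. (-1) ^ (j + k) * cos ((real j - real k) * (w * x)))"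
    for N x
  obtain x0 where "x0 \<in> {0..a}" and x0: "\<forall>x\<in>{0..a}. G x0 \<le> G x"
    using continuous_attains_inf[OF compact_Icc _ cont] \<open>a > 0\<close> by auto
  define m where "m = G x0"
  have "m > 0"
    using pos \<open>x0 \<in> {0..a}\<close> unfolding m_def by simp
  have "integral {0..a} (K N) = real (N + 1) * a" for N
  proof -
    have "integral {0..a} (\<lambda>x. 1 * cos (real j * w * x)) = 0" if "j \<ge> 1" for j
      using integral_cos_multiple_over_period[OF assms(1-3) that] by simp
    from integral_times_fejer_kernel[of a "\<lambda>_. 1" w N, OF _ this] this[of 1] \<open>a > 0\<close>
    show ?thesis
      unfolding K_def by simp
  qed
  then have lower: "m * (real (N + 1) * a) \<le> real (N + 1) * A - 2 * real N * C" for N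
  proof -
    have "integral {0..a} (\<lambda>x. m * K N x) \<le> integral {0..a} (\<lambda>x. G x * K N x)"
      using x0 fejer_kernel_nonneg unfolding K_def m_def
      by (intro integral_le integrable_continuous_interval continuous_intros cont mult_right_mono)
        auto
    then show ?thesis
      using integral_times_fejer_kernel[OF cont vanish, of N] \<open>integral {0..a} (K N) = _\<close>
      unfolding K_def A_def C_def by simp
  qed
  \<comment> \<open>Letting \<open>N \<rightarrow> \<infinity>\<close>: \<open>(N + 1) (A - 2 C) \<ge> m (N + 1) a - 2 C > 0\<close>.\<close>
  obtain N :: nat where N: "2 * \<bar>C\<bar> / (m * a) < real N"
    using reals_Archimedean2 by blast
  then have "2 * C < m * (real (N + 1) * a)"
    using \<open>m > 0\<close> \<open>a > 0\<close> by (simp add: field_simps) (smt (verit) mult_pos_pos)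
  then have "real (N + 1) * (A - 2 * C) > 0"
    using lower[of N] by (simp add: algebra_simps)
  then show ?thesis
    unfolding A_def C_def by (simp add: zero_less_mult_iff)
qed

lemma px_has_real_derivative:
  assumes "has_px_on S g" and "(x, y) \<in> S"
  shows "((\<lambda>t. g (t, y)) has_real_derivative px g (x, y)) (at x)"
  using assms unfolding has_px_on_def px_def by (auto simp: DERIV_deriv_iff_real_differentiable)

lemma py_has_real_derivative:
  assumes "has_py_on S g" and "(x, y) \<in> S"
  shows "((\<lambda>t. g (x, t)) has_real_derivative py g (x, y)) (at y)"
  using assms unfolding has_py_on_def py_def by (auto simp: DERIV_deriv_iff_real_differentiable)

lemma px_comp_swap: "px (g \<circ> prod.swap) = py g \<circ> prod.swap"
  by (auto simp: px_def py_def)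

lemma py_comp_swap: "py (g \<circ> prod.swap) = px g \<circ> prod.swap"
  by (auto simp: px_def py_def)

lemma has_px_on_comp_swap: "has_px_on (prod.swap ` S) (g \<circ> prod.swap) \<longleftrightarrow> has_py_on S g"
  unfolding has_px_on_def has_py_on_def by auto

lemma has_py_on_comp_swap: "has_py_on (prod.swap ` S) (g \<circ> prod.swap) \<longleftrightarrow> has_px_on S g"
  unfolding has_px_on_def has_py_on_def by auto

lemma continuous_on_comp_swap:
  "continuous_on S g \<Longrightarrow> continuous_on (prod.swap ` S) (\<lambda>p. g (prod.swap p))"
  by (rule continuous_on_compose[OF continuous_on_swap, unfolded comp_def]) (simp add: image_comp)

lemma C2_on_comp_swap: "C2_on S u \<Longrightarrow> C2_on (prod.swap ` S) (u \<circ> prod.swap)"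
  unfolding C2_on_def px_comp_swap py_comp_swap has_px_on_comp_swap has_py_on_comp_swap
  by (simp add: continuous_on_comp_swap)

lemma continuous_on_slice_fst:
  assumes "continuous_on S g" and "A \<times> B \<subseteq> S" and "y \<in> B"
  shows "continuous_on A (\<lambda>x. g (x, y))"
  using assms by (intro continuous_on_compose2[OF assms(1)] continuous_intros) auto

lemma has_real_derivative_x_moment:
  fixes g :: "real \<times> real \<Rightarrow> real"
  assumes sub: "{0..c} \<times> {0..d} \<subseteq> S" and "has_py_on S g"
    and "continuous_on S g" and "continuous_on S (py g)" and "continuous_on {0..c} \<omega>"
    and "y \<in> {0..d}"
  shows "((\<lambda>y. integral {0..c} (\<lambda>x. g (x, y) * \<omega> x)) has_real_derivative
           integral {0..c} (\<lambda>x. py g (x, y) * \<omega> x)) (at y within {0..d})"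
proof -
  have "((\<lambda>y. integral (cbox 0 c) (\<lambda>x. g (x, y) * \<omega> x)) has_real_derivative
      integral (cbox 0 c) (\<lambda>x. py g (x, y) * \<omega> x)) (at y within {0..d})"
  proof (rule leibniz_rule_field_derivative[where fx = "\<lambda>y x. py g (x, y) * \<omega> x"])
    fix y' x
    assume "y' \<in> {0..d}" "x \<in> cbox 0 c"
    then have "(x, y') \<in> S"
      using sub by (auto simp: cbox_interval)
    then show "((\<lambda>y. g (x, y) * \<omega> x) has_real_derivative py g (x, y') * \<omega> x) (at y' within {0..d})"
      by (intro has_field_derivative_at_within[OF DERIV_cmult_right] py_has_real_derivative[OF assms(2)])
  next
    fix y'
    assume "y' \<in> {0..d}"
    then have "continuous_on {0..c} (\<lambda>x. g (x, y') * \<omega> x)"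
      by (intro continuous_on_mult continuous_on_slice_fst[OF assms(3) sub] assms(5))
    then show "(\<lambda>x. g (x, y') * \<omega> x) integrable_on cbox 0 c"
      by (simp add: cbox_interval integrable_continuous_interval)
  next
    have "continuous_on ({0..d} \<times> {0..c}) (\<lambda>p. py g (snd p, fst p))"
      using continuous_on_comp_swap[OF continuous_on_subset[OF assms(4) sub], unfolded product_swap]
      by (simp add: prod.swap_def)
    moreover have "continuous_on ({0..d} \<times> {0..c}) (\<lambda>p. \<omega> (snd p))"
      using continuous_on_compose[OF continuous_on_snd[OF continuous_on_id], of "{0..d} \<times> {0..c}" \<omega>] assms(5)
      by (simp add: comp_def)
    ultimately show "continuous_on ({0..d} \<times> cbox 0 c) (\<lambda>(y, x). py g (x, y) * \<omega> x)"
      unfolding cbox_interval case_prod_unfold by (rule continuous_on_mult)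
  qed (use assms(6) in auto)
  then show ?thesis
    by (simp add: cbox_interval)
qed

definition periodic_or_neumann_x :: "real \<Rightarrow> real \<Rightarrow> (real \<times> real \<Rightarrow> real) \<Rightarrow> bool" where
  "periodic_or_neumann_x c d u \<longleftrightarrow>
     (\<forall>y\<in>{0..d}. u (0, y) = u (c, y) \<and> px u (0, y) = px u (c, y)) \<or>
     (\<forall>y\<in>{0..d}. px u (0, y) = 0 \<and> px u (c, y) = 0)"

definition periodic_or_neumann_y :: "real \<Rightarrow> real \<Rightarrow> (real \<times> real \<Rightarrow> real) \<Rightarrow> bool" where
  "periodic_or_neumann_y c d u \<longleftrightarrow>
     (\<forall>x\<in>{0..c}. u (x, 0) = u (x, d) \<and> py u (x, 0) = py u (x, d)) \<or>
     (\<forall>x\<in>{0..c}. py u (x, 0) = 0 \<and> py u (x, d) = 0)"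

lemma periodic_or_neumann_x_comp_swap:
  "periodic_or_neumann_x d c (u \<circ> prod.swap) \<longleftrightarrow> periodic_or_neumann_y c d u"
  unfolding periodic_or_neumann_x_def periodic_or_neumann_y_def px_comp_swap by auto

lemma periodic_or_neumann_y_comp_swap:
  "periodic_or_neumann_y d c (u \<circ> prod.swap) \<longleftrightarrow> periodic_or_neumann_x c d u"
  unfolding periodic_or_neumann_x_def periodic_or_neumann_y_def py_comp_swap by auto

lemma x_moment_periodic_or_neumann:
  assumes "periodic_or_neumann_y c d u"
  shows "periodic_or_neumann d (\<lambda>y. integral {0..c} (\<lambda>x. u (x, y) * \<omega> x))
           (\<lambda>y. integral {0..c} (\<lambda>x. py u (x, y) * \<omega> x))"
  using assms unfolding periodic_or_neumann_y_def
proof (elim disjE)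
  assume "\<forall>x\<in>{0..c}. u (x, 0) = u (x, d) \<and> py u (x, 0) = py u (x, d)"
  then show ?thesis
    unfolding periodic_or_neumann_def by (intro disjI1 conjI integral_cong) auto
next
  assume "\<forall>x\<in>{0..c}. py u (x, 0) = 0 \<and> py u (x, d) = 0"
  then have "integral {0..c} (\<lambda>x. py u (x, y) * \<omega> x) = 0" if "y = 0 \<or> y = d" for y
    using that by (subst integral_cong[where g = "\<lambda>_. 0"]) auto
  then show ?thesis
    unfolding periodic_or_neumann_def by simp
qed

lemma cbox_Pair_real: "cbox (a, c) (b, d) = {a..b} \<times> {c..d}" for a b c d :: real
  by (subst cbox_Pair_eq) (simp add: cbox_interval)

lemma integral_Times_eq_iterated:
  fixes f :: "real \<times> real \<Rightarrow> real"
  assumes "continuous_on ({a..b} \<times> {c..d}) f"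
  shows "integral ({a..b} \<times> {c..d}) f = integral {a..b} (\<lambda>x. integral {c..d} (\<lambda>y. f (x, y)))"
  using integral_prod_continuous[of a c b d f, unfolded cbox_Pair_real] assms
  by (simp add: cbox_interval)

lemma iterated_integral_swap:
  fixes f :: "real \<times> real \<Rightarrow> real"
  assumes "continuous_on ({a..b} \<times> {c..d}) f"
  shows "integral {a..b} (\<lambda>x. integral {c..d} (\<lambda>y. f (x, y)))
       = integral {c..d} (\<lambda>y. integral {a..b} (\<lambda>x. f (x, y)))"
  using integral_swap_continuous[of a c b d "\<lambda>x y. f (x, y)", unfolded cbox_Pair_real] assms
  by (simp add: cbox_interval)

section \<open>Eigenfunctions on a rectangle\<close>

locale helmholtz_rectangle =
  fixes c d lam :: real and u :: "real \<times> real \<Rightarrow> real" and S :: "(real \<times> real) set"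
  assumes c_pos: "c > 0" and d_pos: "d > 0"
    and rectangle_subset: "{0..c} \<times> {0..d} \<subseteq> S" and C2: "C2_on S u"
    and helmholtz: "\<And>x y. x \<in> {0..c} \<Longrightarrow> y \<in> {0..d} \<Longrightarrow>
      px (px u) (x, y) + py (py u) (x, y) = - lam * u (x, y)"
begin

lemma continuous_partials:
  "continuous_on S u" "continuous_on S (px u)" "continuous_on S (py u)"
  "continuous_on S (px (px u))" "continuous_on S (py (py u))"
  using C2 unfolding C2_on_def by auto

lemma has_partials: "has_px_on S u" "has_py_on S u" "has_px_on S (px u)" "has_py_on S (py u)"
  using C2 unfolding C2_on_def by auto

lemma in_S: "x \<in> {0..c} \<Longrightarrow> y \<in> {0..d} \<Longrightarrow> (x, y) \<in> S"
  using rectangle_subset by auto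

lemma swap: "helmholtz_rectangle d c lam (u \<circ> prod.swap) (prod.swap ` S)"
proof (unfold_locales)
  show "{0..d} \<times> {0..c} \<subseteq> prod.swap ` S"
    using image_mono[OF rectangle_subset, of prod.swap] by (simp add: product_swap)
  show "C2_on (prod.swap ` S) (u \<circ> prod.swap)"
    by (rule C2_on_comp_swap[OF C2])
  show "px (px (u \<circ> prod.swap)) (x, y) + py (py (u \<circ> prod.swap)) (x, y)
      = - lam * (u \<circ> prod.swap) (x, y)" if "x \<in> {0..d}" "y \<in> {0..c}" for x y
    using helmholtz[OF that(2,1)] unfolding px_comp_swap py_comp_swap by (simp add: add.commute)
qed (fact d_pos c_pos)+

lemma integral_uxx_times_cos:
  assumes bc: "periodic_or_neumann_x c d u" and "cos (\<nu> * c) = 1" and y: "y \<in> {0..d}"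
  shows "integral {0..c} (\<lambda>x. px (px u) (x, y) * cos (\<nu> * x))
       = - \<nu>\<^sup>2 * integral {0..c} (\<lambda>x. u (x, y) * cos (\<nu> * x))"
proof -
  have "sin (\<nu> * c) = 0"
    using \<open>cos (\<nu> * c) = 1\<close> sin_cos_squared_add[of "\<nu> * c"] by simp
  have D: "((\<lambda>x. px u (x, y) * cos (\<nu> * x) + \<nu> * u (x, y) * sin (\<nu> * x)) has_real_derivative
      px (px u) (x, y) * cos (\<nu> * x) + \<nu>\<^sup>2 * (u (x, y) * cos (\<nu> * x))) (at x)"
    if "x \<in> {0..c}" for x
    using px_has_real_derivative[OF has_partials(1) in_S[OF that y]]
      px_has_real_derivative[OF has_partials(3) in_S[OF that y]]
    by (auto intro!: derivative_eq_intros simp: algebra_simps power2_eq_square)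
  from integral_eq_diff_real_derivative[OF _ has_field_derivative_at_within[OF D]] c_pos
  have "integral {0..c} (\<lambda>x. px (px u) (x, y) * cos (\<nu> * x) + \<nu>\<^sup>2 * (u (x, y) * cos (\<nu> * x)))
      = px u (c, y) - px u (0, y)"
    using \<open>cos (\<nu> * c) = 1\<close> \<open>sin (\<nu> * c) = 0\<close> by simp
  also have "\<dots> = 0"
    using bc y unfolding periodic_or_neumann_x_def by auto
  finally show ?thesis
    using y by (subst (asm) integral_add)
      (auto intro!: integrable_continuous_interval continuous_intros
        continuous_on_slice_fst[OF _ rectangle_subset] continuous_partials)
qed

lemma x_moment_cos_oscillator:
  assumes bc: "periodic_or_neumann_x c d u" and "cos (\<nu> * c) = 1"
  shows "oscillator_on d (lam - \<nu>\<^sup>2) (\<lambda>y. integral {0..c} (\<lambda>x. u (x, y) * cos (\<nu> * x)))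
           (\<lambda>y. integral {0..c} (\<lambda>x. py u (x, y) * cos (\<nu> * x)))"
  unfolding oscillator_on_def
proof (intro ballI conjI)
  fix y
  assume y: "y \<in> {0..d}"
  have cos: "continuous_on {0..c} (\<lambda>x. cos (\<nu> * x))"
    by (intro continuous_intros)
  show "((\<lambda>y. integral {0..c} (\<lambda>x. u (x, y) * cos (\<nu> * x))) has_real_derivative
      integral {0..c} (\<lambda>x. py u (x, y) * cos (\<nu> * x))) (at y within {0..d})"
    by (rule has_real_derivative_x_moment[OF rectangle_subset has_partials(2)
          continuous_partials(1,3) cos y])
  have "integral {0..c} (\<lambda>x. py (py u) (x, y) * cos (\<nu> * x))
      = integral {0..c} (\<lambda>x. - lam * (u (x, y) * cos (\<nu> * x)) - px (px u) (x, y) * cos (\<nu> * x))"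
  proof (rule integral_cong)
    fix x
    assume "x \<in> {0..c}"
    then have "py (py u) (x, y) = - lam * u (x, y) - px (px u) (x, y)"
      using helmholtz[OF _ y] by (simp add: eq_diff_eq add.commute)
    then show "py (py u) (x, y) * cos (\<nu> * x)
        = - lam * (u (x, y) * cos (\<nu> * x)) - px (px u) (x, y) * cos (\<nu> * x)"
      by (simp only: left_diff_distrib mult.assoc)
  qed
  also have "\<dots> = - (lam - \<nu>\<^sup>2) * integral {0..c} (\<lambda>x. u (x, y) * cos (\<nu> * x))"
    using y integral_uxx_times_cos[OF assms y]
    by (subst integral_diff)
      (auto intro!: integrable_continuous_interval continuous_intros
        continuous_on_slice_fst[OF _ rectangle_subset] continuous_partials simp: algebra_simps)
  finally show "((\<lambda>y. integral {0..c} (\<lambda>x. py u (x, y) * cos (\<nu> * x))) has_real_derivative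
      - (lam - \<nu>\<^sup>2) * integral {0..c} (\<lambda>x. u (x, y) * cos (\<nu> * x))) (at y within {0..d})"
    using has_real_derivative_x_moment[OF rectangle_subset has_partials(4)
        continuous_partials(3,5) cos y] by simp
qed

lemma x_integral_oscillator:
  assumes "periodic_or_neumann_x c d u"
  shows "oscillator_on d lam (\<lambda>y. integral {0..c} (\<lambda>x. u (x, y)))
           (\<lambda>y. integral {0..c} (\<lambda>x. py u (x, y)))"
  using x_moment_cos_oscillator[OF assms, of 0] by simp

lemma continuous_on_rectangle:
  "continuous_on S g \<Longrightarrow> continuous_on ({0..c} \<times> {0..d}) g"
  using continuous_on_subset rectangle_subset by blast

lemma integral_ux_squared:
  assumes bc: "periodic_or_neumann_x c d u" and y: "y \<in> {0..d}"
  shows "integral {0..c} (\<lambda>x. (px u (x, y))\<^sup>2) = - integral {0..c} (\<lambda>x. u (x, y) * px (px u) (x, y))"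
proof -
  have D: "((\<lambda>x. u (x, y) * px u (x, y)) has_real_derivative
      (px u (x, y))\<^sup>2 + u (x, y) * px (px u) (x, y)) (at x)" if "x \<in> {0..c}" for x
    using DERIV_mult[OF px_has_real_derivative[OF has_partials(1) in_S[OF that y]]
        px_has_real_derivative[OF has_partials(3) in_S[OF that y]]]
    by (simp add: power2_eq_square algebra_simps)
  from integral_eq_diff_real_derivative[OF _ has_field_derivative_at_within[OF D]] c_pos
  have "integral {0..c} (\<lambda>x. (px u (x, y))\<^sup>2 + u (x, y) * px (px u) (x, y))
      = u (c, y) * px u (c, y) - u (0, y) * px u (0, y)"
    by simp
  also have "\<dots> = 0"
    using bc y unfolding periodic_or_neumann_x_def by auto
  finally show ?thesis
    using y
    by (subst (asm) integral_add)
      (auto intro!: integrable_continuous_interval continuous_intros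
        continuous_on_slice_fst[OF _ rectangle_subset] continuous_partials)
qed

lemma integral_uy_squared:
  assumes bc: "periodic_or_neumann_y c d u" and x: "x \<in> {0..c}"
  shows "integral {0..d} (\<lambda>y. (py u (x, y))\<^sup>2) = - integral {0..d} (\<lambda>y. u (x, y) * py (py u) (x, y))"
proof -
  interpret swapped: helmholtz_rectangle d c lam "u \<circ> prod.swap" "prod.swap ` S"
    by (rule swap)
  show ?thesis
    using swapped.integral_ux_squared[of x] bc x
    by (simp add: periodic_or_neumann_x_comp_swap px_comp_swap)
qed

lemma gradient_energy:
  assumes "periodic_or_neumann_x c d u" and "periodic_or_neumann_y c d u"
  shows "integral ({0..c} \<times> {0..d}) (\<lambda>p. (px u p)\<^sup>2 + (py u p)\<^sup>2)
       = lam * integral ({0..c} \<times> {0..d}) (\<lambda>p. (u p)\<^sup>2)"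
proof -
  let ?R = "{0..c} \<times> {0..d}"
  have cont: "continuous_on ?R (\<lambda>p. u p * px (px u) p)" "continuous_on ?R (\<lambda>p. u p * py (py u) p)"
    "continuous_on ?R (\<lambda>p. (px u p)\<^sup>2)" "continuous_on ?R (\<lambda>p. (py u p)\<^sup>2)"
    by (intro continuous_intros continuous_on_rectangle continuous_partials)+
  have integrable: "g integrable_on ?R" if "continuous_on ?R g" for g :: "real \<times> real \<Rightarrow> real"
    using integrable_continuous[of "(0, 0)" "(c, d)" g, unfolded cbox_Pair_real] that .
  have "integral ?R (\<lambda>p. (px u p)\<^sup>2) = integral {0..d} (\<lambda>y. integral {0..c} (\<lambda>x. (px u (x, y))\<^sup>2))"
    using integral_Times_eq_iterated[OF cont(3)] iterated_integral_swap[OF cont(3)] by simp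
  also have "\<dots> = integral {0..d} (\<lambda>y. - integral {0..c} (\<lambda>x. u (x, y) * px (px u) (x, y)))"
    using integral_ux_squared[OF assms(1)] by (intro integral_cong) simp
  also have "\<dots> = - integral ?R (\<lambda>p. u p * px (px u) p)"
    using integral_Times_eq_iterated[OF cont(1)] iterated_integral_swap[OF cont(1)] by simp
  finally have x_part: "integral ?R (\<lambda>p. (px u p)\<^sup>2) = - integral ?R (\<lambda>p. u p * px (px u) p)" .
  have "integral ?R (\<lambda>p. (py u p)\<^sup>2) = integral {0..c} (\<lambda>x. integral {0..d} (\<lambda>y. (py u (x, y))\<^sup>2))"
    using integral_Times_eq_iterated[OF cont(4)] by simp
  also have "\<dots> = integral {0..c} (\<lambda>x. - integral {0..d} (\<lambda>y. u (x, y) * py (py u) (x, y)))"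
    using integral_uy_squared[OF assms(2)] by (intro integral_cong) simp
  also have "\<dots> = - integral ?R (\<lambda>p. u p * py (py u) p)"
    using integral_Times_eq_iterated[OF cont(2)] by simp
  finally have y_part: "integral ?R (\<lambda>p. (py u p)\<^sup>2) = - integral ?R (\<lambda>p. u p * py (py u) p)" .
  have "integral ?R (\<lambda>p. u p * px (px u) p) + integral ?R (\<lambda>p. u p * py (py u) p)
      = integral ?R (\<lambda>p. u p * px (px u) p + u p * py (py u) p)"
    by (rule integral_add[symmetric]) (intro integrable cont)+
  also have "\<dots> = integral ?R (\<lambda>p. - lam * (u p)\<^sup>2)"
  proof (rule integral_cong)
    fix p
    assume "p \<in> ?R"
    then obtain x y where "p = (x, y)" "x \<in> {0..c}" "y \<in> {0..d}"
      by auto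
    then show "u p * px (px u) p + u p * py (py u) p = - lam * (u p)\<^sup>2"
      using helmholtz[of x y] by (simp add: power2_eq_square flip: distrib_left)
  qed
  finally show ?thesis
    using x_part y_part integral_add[OF integrable integrable, OF cont(3,4)] by simp
qed

lemma constant_if_eigenvalue_zero:
  assumes "periodic_or_neumann_x c d u" and "periodic_or_neumann_y c d u" and "lam = 0"
    and x: "x \<in> {0..c}" and y: "y \<in> {0..d}"
  shows "u (x, y) = u (0, 0)"
proof -
  have R: "{0..c} \<times> {0..d} = cbox (0, 0) (c, d)"
    by (rule cbox_Pair_real[symmetric])
  have "continuous_on (cbox (0, 0) (c, d)) (\<lambda>p. (px u p)\<^sup>2 + (py u p)\<^sup>2)"
    unfolding R[symmetric] by (intro continuous_intros continuous_on_rectangle continuous_partials)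
  moreover have "box (0, 0) (c, d) \<noteq> {}"
    using c_pos d_pos by (simp add: box_ne_empty inner_Pair_0 Basis_prod_def)
  moreover have "integral (cbox (0, 0) (c, d)) (\<lambda>p. (px u p)\<^sup>2 + (py u p)\<^sup>2) = 0"
    using gradient_energy[OF assms(1,2)] \<open>lam = 0\<close> unfolding R by simp
  ultimately have "\<forall>p\<in>cbox (0, 0) (c, d). (px u p)\<^sup>2 + (py u p)\<^sup>2 = 0"
    by (subst (asm) integral_cbox_eq_0_iff) auto
  then have grad: "px u (s, t) = 0" "py u (s, t) = 0" if "s \<in> {0..c}" "t \<in> {0..d}" for s t
    using that unfolding R[symmetric] by (auto simp: add_nonneg_eq_0_iff)
  have "((\<lambda>s. u (s, y)) has_real_derivative 0) (at s)" if "s \<in> {0..x}" for s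
    using px_has_real_derivative[OF has_partials(1) in_S, of s y] grad(1)[of s y] that x y by simp
  then have "u (x, y) = u (0, y)"
    using real_derivative_zero_constant[OF has_field_derivative_at_within, of 0 x "\<lambda>s. u (s, y)" x] x
    by simp
  also have "((\<lambda>t. u (0, t)) has_real_derivative 0) (at t)" if "t \<in> {0..y}" for t
    using py_has_real_derivative[OF has_partials(2) in_S, of 0 t] grad(2)[of 0 t] that y c_pos by simp
  then have "u (0, y) = u (0, 0)"
    using real_derivative_zero_constant[OF has_field_derivative_at_within, of 0 y "\<lambda>t. u (0, t)" y] y
    by simp
  finally show ?thesis .
qed

lemma x_integral_pos:
  assumes "y \<in> {0..d}" and "\<And>x. x \<in> {0..c} \<Longrightarrow> u (x, y) > 0"
  shows "integral {0..c} (\<lambda>x. u (x, y)) > 0"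
  using integral_less_real[of 0 c "\<lambda>_. 0" "\<lambda>x. u (x, y)"] c_pos assms
    continuous_on_slice_fst[OF continuous_partials(1) rectangle_subset assms(1)]
  by simp

lemma eigenvalue_nonneg:
  assumes "periodic_or_neumann_x c d u" and "periodic_or_neumann_y c d u"
    and bottom: "\<And>x. x \<in> {0..c} \<Longrightarrow> u (x, 0) > 0"
  shows "lam \<ge> 0"
proof (rule ccontr)
  assume "\<not> lam \<ge> 0"
  moreover have "periodic_or_neumann d (\<lambda>y. integral {0..c} (\<lambda>x. u (x, y)))
      (\<lambda>y. integral {0..c} (\<lambda>x. py u (x, y)))"
    using x_moment_periodic_or_neumann[OF assms(2), of "\<lambda>_. 1"] by simp
  ultimately have "integral {0..c} (\<lambda>x. u (x, 0)) = 0"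
    using oscillator_on_negative_eq_0[OF d_pos x_integral_oscillator[OF assms(1)]] d_pos by simp
  moreover have "integral {0..c} (\<lambda>x. u (x, 0)) > 0"
    using x_integral_pos bottom d_pos by simp
  ultimately show False
    by simp
qed

lemma cos_sqrt_eigenvalue_height:
  assumes "lam > 0" and "periodic_or_neumann_x c d u" and "periodic_or_neumann_y c d u"
    and bottom: "\<And>x. x \<in> {0..c} \<Longrightarrow> u (x, 0) > 0"
    and top: "\<And>x. x \<in> {0..c} \<Longrightarrow> u (x, d) > 0"
  shows "cos (sqrt lam * d) = 1"
proof (rule oscillator_on_positive_period[OF _ d_pos])
  show "sqrt lam > 0"
    using \<open>lam > 0\<close> by simp
  show "oscillator_on d ((sqrt lam)\<^sup>2) (\<lambda>y. integral {0..c} (\<lambda>x. u (x, y)))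
      (\<lambda>y. integral {0..c} (\<lambda>x. py u (x, y)))"
    using x_integral_oscillator[OF assms(2)] \<open>lam > 0\<close> by simp
  show "periodic_or_neumann d (\<lambda>y. integral {0..c} (\<lambda>x. u (x, y)))
      (\<lambda>y. integral {0..c} (\<lambda>x. py u (x, y)))"
    using x_moment_periodic_or_neumann[OF assms(3), of "\<lambda>_. 1"] by simp
  show "integral {0..c} (\<lambda>x. u (x, 0)) > 0" "integral {0..c} (\<lambda>x. u (x, d)) > 0"
    using x_integral_pos bottom top d_pos by simp_all
qed

lemma x_integral_eq_trig:
  assumes "lam > 0" and "periodic_or_neumann_x c d u"
  obtains B where "\<And>y. y \<in> {0..d} \<Longrightarrow> integral {0..c} (\<lambda>x. u (x, y))
    = integral {0..c} (\<lambda>x. u (x, 0)) * cos (sqrt lam * y) + B * sin (sqrt lam * y)"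
proof
  have osc: "oscillator_on d ((sqrt lam)\<^sup>2) (\<lambda>y. integral {0..c} (\<lambda>x. u (x, y)))
      (\<lambda>y. integral {0..c} (\<lambda>x. py u (x, y)))"
    using x_integral_oscillator[OF assms(2)] \<open>lam > 0\<close> by simp
  have "sqrt lam > 0"
    using \<open>lam > 0\<close> by simp
  show "integral {0..c} (\<lambda>x. u (x, y))
      = integral {0..c} (\<lambda>x. u (x, 0)) * cos (sqrt lam * y)
        + integral {0..c} (\<lambda>x. py u (x, 0)) / sqrt lam * sin (sqrt lam * y)"
    if "y \<in> {0..d}" for y
    by (rule oscillator_on_positive_solution(1)[OF \<open>sqrt lam > 0\<close> osc that])
qed

lemma bottom_cos_moment_vanish:
  assumes "lam > 0" and bc: "periodic_or_neumann_x c d u" "periodic_or_neumann_y c d u"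
    and period: "cos (sqrt lam * c) = 1" and "j \<ge> 2"
  shows "integral {0..c} (\<lambda>x. u (x, 0) * cos (real j * sqrt lam * x)) = 0"
proof -
  have "cos ((real j * sqrt lam) * c) = 1"
    using cos_sin_multiple_of_period(1)[OF period, of j] by (simp add: mult.assoc)
  note osc = x_moment_cos_oscillator[OF bc(1) this]
  have "(real j * sqrt lam)\<^sup>2 = (real j)\<^sup>2 * lam"
    using \<open>lam > 0\<close> by (simp add: power_mult_distrib)
  moreover have "(real j)\<^sup>2 \<ge> 2\<^sup>2"
    using \<open>j \<ge> 2\<close> by (intro power_mono) auto
  then have "(real j)\<^sup>2 * lam \<ge> 4 * lam"
    using \<open>lam > 0\<close> by (intro mult_right_mono) auto
  ultimately have "lam - (real j * sqrt lam)\<^sup>2 < 0"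
    using \<open>lam > 0\<close> by linarith
  from oscillator_on_negative_eq_0[OF d_pos osc this x_moment_periodic_or_neumann[OF bc(2)]]
  show ?thesis
    using d_pos by (simp add: mult.assoc)
qed

lemma bottom_fejer_bound:
  assumes "lam > 0" and bc: "periodic_or_neumann_x c d u" "periodic_or_neumann_y c d u"
    and period: "cos (sqrt lam * c) = 1"
    and bottom: "\<And>x. x \<in> {0..c} \<Longrightarrow> u (x, 0) > 0"
  shows "2 * integral {0..c} (\<lambda>x. u (x, 0) * cos (sqrt lam * x)) < integral {0..c} (\<lambda>x. u (x, 0))"
  using \<open>lam > 0\<close> d_pos
  by (intro fejer_cos_moment_bound[OF c_pos _ period _ bottom bottom_cos_moment_vanish[OF assms(1-4)]]
      continuous_on_slice_fst[OF continuous_partials(1) rectangle_subset]) auto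

lemma bottom_first_cos_moment_eq:
  assumes "lam > 0" and bc: "periodic_or_neumann_x c d u" "periodic_or_neumann_y c d u"
    and period: "cos (sqrt lam * c) = 1"
  shows "d * integral {0..c} (\<lambda>x. u (x, 0) * cos (sqrt lam * x))
       = c / 2 * integral {0..d} (\<lambda>y. u (0, y))"
proof -
  interpret swapped: helmholtz_rectangle d c lam "u \<circ> prod.swap" "prod.swap ` S"
    by (rule swap)
  define w where "w = sqrt lam"
  define M where "M = integral {0..c} (\<lambda>x. u (x, 0) * cos (w * x))"
  define A' where "A' = integral {0..d} (\<lambda>y. u (0, y))"
  have "w > 0"
    using \<open>lam > 0\<close> unfolding w_def by simp
  have "periodic_or_neumann_x d c (u \<circ> prod.swap)"
    using bc(2) by (simp add: periodic_or_neumann_x_comp_swap)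
  then obtain B where B_swapped: "\<And>x. x \<in> {0..c} \<Longrightarrow> integral {0..d} (\<lambda>y. (u \<circ> prod.swap) (y, x))
      = integral {0..d} (\<lambda>y. (u \<circ> prod.swap) (y, 0)) * cos (sqrt lam * x) + B * sin (sqrt lam * x)"
    by (rule swapped.x_integral_eq_trig[OF \<open>lam > 0\<close>]) blast
  have B: "integral {0..d} (\<lambda>y. u (x, y)) = A' * cos (w * x) + B * sin (w * x)" if "x \<in> {0..c}" for x
    using B_swapped[OF that] unfolding w_def A'_def by simp
  \<comment> \<open>For \<open>\<nu> = \<surd>\<lambda>\<close> the first cosine moment solves \<open>f'' = 0\<close>, so it does not depend on \<open>y\<close>.\<close>
  have "oscillator_on d 0 (\<lambda>y. integral {0..c} (\<lambda>x. u (x, y) * cos (w * x)))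
      (\<lambda>y. integral {0..c} (\<lambda>x. py u (x, y) * cos (w * x)))"
    using x_moment_cos_oscillator[OF bc(1) period] \<open>lam > 0\<close> unfolding w_def by simp
  from oscillator_on_zero_constant[OF d_pos this x_moment_periodic_or_neumann[OF bc(2)]]
  have M: "\<And>y. y \<in> {0..d} \<Longrightarrow> integral {0..c} (\<lambda>x. u (x, y) * cos (w * x)) = M"
    unfolding M_def .
  have cont: "continuous_on ({0..c} \<times> {0..d}) (\<lambda>p. u p * cos (w * fst p))"
    by (intro continuous_intros continuous_on_rectangle continuous_partials)
  have "d * M = integral {0..d} (\<lambda>y. M)"
    using d_pos by simp
  also have "\<dots> = integral {0..d} (\<lambda>y. integral {0..c} (\<lambda>x. u (x, y) * cos (w * x)))"
    using M by (intro integral_cong) simp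
  also have "\<dots> = integral {0..c} (\<lambda>x. integral {0..d} (\<lambda>y. u (x, y)) * cos (w * x))"
    using iterated_integral_swap[OF cont] by simp
  also have "\<dots> = integral {0..c} (\<lambda>x. (A' * cos (w * x) + B * sin (w * x)) * cos (w * x))"
    using B by (intro integral_cong) simp
  also have "\<dots> = c / 2 * A'"
    using integral_trig_times_cos_over_period[OF c_pos \<open>w > 0\<close>] period unfolding w_def by simp
  finally show ?thesis
    unfolding w_def M_def A'_def .
qed

lemma eigenvalue_nonpos:
  assumes bc: "periodic_or_neumann_x c d u" "periodic_or_neumann_y c d u"
    and bottom: "\<And>x. x \<in> {0..c} \<Longrightarrow> u (x, 0) > 0"
    and top: "\<And>x. x \<in> {0..c} \<Longrightarrow> u (x, d) > 0"
    and left: "\<And>y. y \<in> {0..d} \<Longrightarrow> u (0, y) > 0"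
    and right: "\<And>y. y \<in> {0..d} \<Longrightarrow> u (c, y) > 0"
  shows "lam \<le> 0"
proof (rule ccontr)
  assume "\<not> lam \<le> 0"
  then have "lam > 0"
    by simp
  interpret swapped: helmholtz_rectangle d c lam "u \<circ> prod.swap" "prod.swap ` S"
    by (rule swap)
  have bc_swapped: "periodic_or_neumann_x d c (u \<circ> prod.swap)" "periodic_or_neumann_y d c (u \<circ> prod.swap)"
    using bc by (simp_all add: periodic_or_neumann_x_comp_swap periodic_or_neumann_y_comp_swap)
  have period_c: "cos (sqrt lam * c) = 1"
    using swapped.cos_sqrt_eigenvalue_height[OF \<open>lam > 0\<close> bc_swapped] left right by simp
  have period_d: "cos (sqrt lam * d) = 1"
    by (rule cos_sqrt_eigenvalue_height[OF \<open>lam > 0\<close> bc bottom top])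
  define A where "A = integral {0..c} (\<lambda>x. u (x, 0))"
  define A' where "A' = integral {0..d} (\<lambda>y. u (0, y))"
  have "c * A' = d * (2 * integral {0..c} (\<lambda>x. u (x, 0) * cos (sqrt lam * x)))"
    using bottom_first_cos_moment_eq[OF \<open>lam > 0\<close> bc period_c] unfolding A'_def
    by (simp add: field_simps)
  also have "\<dots> < d * A"
    using bottom_fejer_bound[OF \<open>lam > 0\<close> bc period_c bottom] d_pos unfolding A_def
    by (rule mult_strict_left_mono)
  finally have "c * A' < d * A" .
  have "d * A = c * (2 * integral {0..d} (\<lambda>y. u (0, y) * cos (sqrt lam * y)))"
    using swapped.bottom_first_cos_moment_eq[OF \<open>lam > 0\<close> bc_swapped period_d] unfolding A_def
    by (simp add: field_simps)
  also have "\<dots> < c * A'"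
    using swapped.bottom_fejer_bound[OF \<open>lam > 0\<close> bc_swapped period_d] left c_pos unfolding A'_def
    by (intro mult_strict_left_mono) simp_all
  finally have "d * A < c * A'" .
  with \<open>c * A' < d * A\<close> show False
    by (simp add: mult.commute)
qed

theorem constant_if_positive_on_sides:
  assumes bc: "periodic_or_neumann_x c d u" "periodic_or_neumann_y c d u"
    and bottom: "\<And>x. x \<in> {0..c} \<Longrightarrow> u (x, 0) > 0"
    and top: "\<And>x. x \<in> {0..c} \<Longrightarrow> u (x, d) > 0"
    and left: "\<And>y. y \<in> {0..d} \<Longrightarrow> u (0, y) > 0"
    and right: "\<And>y. y \<in> {0..d} \<Longrightarrow> u (c, y) > 0"
  shows "\<exists>C > 0. \<forall>p \<in> {0..c} \<times> {0..d}. u p = C"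
proof -
  have "lam = 0"
    using eigenvalue_nonneg[OF bc bottom] eigenvalue_nonpos[OF bc bottom top left right] by simp
  have "\<forall>p \<in> {0..c} \<times> {0..d}. u p = u (0, 0)"
  proof
    fix p
    assume "p \<in> {0..c} \<times> {0..d}"
    then obtain x y where "p = (x, y)" "x \<in> {0..c}" "y \<in> {0..d}"
      by blast
    then show "u p = u (0, 0)"
      using constant_if_eigenvalue_zero[OF bc \<open>lam = 0\<close>] by blast
  qed
  moreover have "u (0, 0) > 0"
    using bottom c_pos by simp
  ultimately show ?thesis
    by blast
qed

end

lemma helmholtz_on_closed_rectangle:
  assumes "c > 0" "d > 0" and sub: "{0..c} \<times> {0..d} \<subseteq> S" and C2: "C2_on S u"
    and eq: "\<forall>p \<in> {0<..<c} \<times> {0<..<d}. - laplacian u p = lam * u p"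
    and "x \<in> {0..c}" "y \<in> {0..d}"
  shows "px (px u) (x, y) + py (py u) (x, y) = - lam * u (x, y)"
proof -
  let ?f = "\<lambda>p. px (px u) p + py (py u) p + lam * u p"
  have closure: "closure ({0<..<c} \<times> {0<..<d}) = {0..c} \<times> {0..d}"
    using assms(1,2) by (simp add: closure_Times)
  have "continuous_on S ?f"
    using C2 unfolding C2_on_def by (intro continuous_intros) auto
  then have "continuous_on ({0..c} \<times> {0..d}) ?f"
    using sub by (rule continuous_on_subset)
  moreover have "?f p = 0" if "p \<in> {0<..<c} \<times> {0<..<d}" for p
  proof -
    have "- laplacian u p = lam * u p"
      using eq that by blast
    then show ?thesis
      unfolding laplacian_def by linarith
  qed
  ultimately have "?f (x, y) = 0"
    using continuous_constant_on_closure[of "{0<..<c} \<times> {0<..<d}" ?f 0 "(x, y)"] assms(6,7)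
    unfolding closure by simp
  then show ?thesis
    by (simp add: algebra_simps)
qed

lemma frontier_open_rectangle:
  fixes c d :: real
  assumes "c > 0" "d > 0"
  shows "frontier ({0<..<c} \<times> {0<..<d}) = {0..c} \<times> {0..d} - {0<..<c} \<times> {0<..<d}"
  using assms by (simp add: frontier_def closure_Times interior_open open_Times)

theorem corollary3p1:
  fixes c d lam :: real and u :: "real \<times> real \<Rightarrow> real" and S :: "(real \<times> real) set"
  assumes "c > 0" and "d > 0"
    and "open S" and "{0..c} \<times> {0..d} \<subseteq> S" and "C2_on S u"
    and "\<forall>p \<in> {0<..<c} \<times> {0<..<d}. - laplacian u p = lam * u p"
    and "\<forall>p \<in> frontier ({0<..<c} \<times> {0<..<d}). u p > 0"
  shows "((\<forall>y\<in>{0..d}. u (0, y) = u (c, y) \<and> px u (0, y) = px u (c, y)) \<and>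
          (\<forall>x\<in>{0..c}. u (x, 0) = u (x, d) \<and> py u (x, 0) = py u (x, d))
          \<longrightarrow> (\<exists>C > 0. \<forall>p \<in> {0..c} \<times> {0..d}. u p = C))
       \<and> ((\<forall>x\<in>{0..c}. py u (x, 0) = 0 \<and> py u (x, d) = 0) \<and>
          (\<forall>y\<in>{0..d}. u (0, y) = u (c, y) \<and> px u (0, y) = px u (c, y))
          \<longrightarrow> (\<exists>C > 0. \<forall>p \<in> {0..c} \<times> {0..d}. u p = C))"
proof -
  interpret helmholtz_rectangle c d lam u S
    using assms(1,2,4,5) helmholtz_on_closed_rectangle[OF assms(1,2,4,5,6)]
    by unfold_locales auto
  have "u (x, y) > 0" if "x \<in> {0..c}" "y \<in> {0..d}" "x \<in> {0, c} \<or> y \<in> {0, d}" for x y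
    using assms(7) that unfolding frontier_open_rectangle[OF assms(1,2)] by auto
  then have sides: "\<And>x. x \<in> {0..c} \<Longrightarrow> u (x, 0) > 0" "\<And>x. x \<in> {0..c} \<Longrightarrow> u (x, d) > 0"
    "\<And>y. y \<in> {0..d} \<Longrightarrow> u (0, y) > 0" "\<And>y. y \<in> {0..d} \<Longrightarrow> u (c, y) > 0"
    using assms(1,2) by auto
  show ?thesis
  proof (intro conjI impI; elim conjE)
    assume "\<forall>y\<in>{0..d}. u (0, y) = u (c, y) \<and> px u (0, y) = px u (c, y)"
      and "\<forall>x\<in>{0..c}. u (x, 0) = u (x, d) \<and> py u (x, 0) = py u (x, d)"
    then show "\<exists>C > 0. \<forall>p \<in> {0..c} \<times> {0..d}. u p = C"
      by (intro constant_if_positive_on_sides sides)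
        (simp_all add: periodic_or_neumann_x_def periodic_or_neumann_y_def)
  next
    assume "\<forall>x\<in>{0..c}. py u (x, 0) = 0 \<and> py u (x, d) = 0"
      and "\<forall>y\<in>{0..d}. u (0, y) = u (c, y) \<and> px u (0, y) = px u (c, y)"
    then show "\<exists>C > 0. \<forall>p \<in> {0..c} \<times> {0..d}. u p = C"
      by (intro constant_if_positive_on_sides sides)
        (simp_all add: periodic_or_neumann_x_def periodic_or_neumann_y_def)
  qed
qed

end
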